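(* There exists a sequence $S\in\{0,1\}^\omega$ which is i.o. LZ-deep and FS-deep but not (a.e.) LZ-deep.
   Context: $S\upharpoonright n$ is the length-$n$ prefix of $S$. A finite-state transducer (FST) is $T=(Q,q_0,\delta,\nu)$ with finite state set $Q$, start state $q_0$, $\delta:Q\times\{0,1\}\to Q$, $\nu:Q\times\{0,1\}\to\{0,1\}^*$; $T(\lambda)=\lambda$, $T(xb)=T(x)\nu(\hat\delta(x),b)$; $T$ is an ILFST if $x\mapsto(T(x),\hat\delta(x))$ is injective. FSTs are described by the following fixed binary representation. For $n\ge1$, $\mathrm{bin}(n)$ is the binary representation of $n$ and $\mathrm{string}(n)$ is $\mathrm{bin}(n)$ without its leading 1. For $x=x_1\cdots x_l$, $x^\dagger=x_10x_20\cdots x_{l-1}0x_l1$, $x^\diamond=\overline{(1x)^\dagger}$ (bitwise complement), $d(x)=x_1x_1\cdots x_lx_l$. For an FST with states $q_1,\dots,q_m$, write for $t=2i-1+b$: $(\delta(q_i,b),\nu(q_i,b))=(q_{1+(n_t\bmod m)},\mathrm{string}(n'_t))$; the table is encoded as $\pi=\mathrm{bin}(n_1)^\ddagger\mathrm{string}(n'_1)^\diamond\cdots\mathrm{bin}(n_{2m})^\ddagger\mathrm{string}(n'_{2m})^\diamond$, where $\mathrm{bin}(n_t)^\ddagger$ is empty for a self-loop and $\mathrm{bin}(n_t)^\dagger$ otherwise; $d(\mathrm{bin}(i))01\pi$ describes that FST with start state $q_i$. $|T|$ is the shortest description length, $\mathrm{FST}^{\le k}=\{T:|T|\le k\}$,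 and $D^k(x)=\min\{|y|:T\in\mathrm{FST}^{\le k},T(y)=x\}$. $S$ is FS-deep if there is $\alpha>0$ such that for every $k$ there is $k'$ with $D^k(S\upharpoonright n)-D^{k'}(S\upharpoonright n)\ge\alpha n$ for infinitely many $n$. LZ denotes the Lempel–Ziv 78 compressor: it parses $x=x_1\cdots x_n$ into phrases, each distinct from all earlier ones (except possibly the last), with $x_i=x_{l(i)}b_i$, $l(i)<i$, $b_i\in\{0,1\}$, $x_0=\lambda$; it outputs $c_{l(1)}b_1\cdots c_{l(n)}b_n$ with $c_j$ a prefix-free encoding of index $j$. $S$ is (a.e.) LZ-deep if there is $\alpha>0$ such that for every ILFST $C$, $|C(S\upharpoonright n)|-|\mathrm{LZ}(S\upharpoonright n)|\ge\alpha n$ for all but finitely many $n$; $S$ is i.o. LZ-deep if there is $\alpha>0$ such that for every ILFST $C$ this inequality holds for infinitely many $n$. *)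

theory Defs
  imports Complex_Main "HOL-Library.Extended_Real"
begin

text \<open>Binary strings are bool lists (True = 1, False = 0); sequences in {0,1}^omega are
  functions nat => bool.  The length-n prefix of S:\<close>

definition prefix :: "(nat \<Rightarrow> bool) \<Rightarrow> nat \<Rightarrow> bool list" where
  "prefix S n = map S [0..<n]"

text \<open>bin n: binary representation of n (most significant bit first), for n >= 1.\<close>
fun bin :: "nat \<Rightarrow> bool list" where
  "bin n = (if n \<le> 1 then [n = 1] else bin (n div 2) @ [n mod 2 = 1])"

definition str :: "nat \<Rightarrow> bool list" where
  "str n = tl (bin n)"

fun dag :: "bool list \<Rightarrow> bool list" where
  "dag [] = []"
| "dag [x] = [x, True]"
| "dag (x # xs) = x # False # dag xs"

definition diam :: "bool list \<Rightarrow> bool list" where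
  "diam x = map Not (dag (True # x))"

definition dbl :: "bool list \<Rightarrow> bool list" where
  "dbl x = concat (map (\<lambda>b. [b, b]) x)"

text \<open>An FST with m states, represented as the states 0..<m (state q_i of the paper is i-1).\<close>
record fst =
  nstates :: nat
  start :: nat
  delta :: "nat \<Rightarrow> bool \<Rightarrow> nat"
  nu :: "nat \<Rightarrow> bool \<Rightarrow> bool list"

definition wf_fst :: "fst \<Rightarrow> bool" where
  "wf_fst T \<longleftrightarrow> 0 < nstates T \<and> start T < nstates T \<and>
     (\<forall>q < nstates T. \<forall>b. delta T q b < nstates T)"

fun run_from :: "fst \<Rightarrow> nat \<Rightarrow> bool list \<Rightarrow> bool list \<times> nat" where
  "run_from T q [] = ([], q)"
| "run_from T q (b # x) =
     (let (w, q') = run_from T (delta T q b) x in (nu T q b @ w, q'))"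

definition fst_out :: "fst \<Rightarrow> bool list \<Rightarrow> bool list" where
  "fst_out T x = fst (run_from T (start T) x)"

definition fst_state :: "fst \<Rightarrow> bool list \<Rightarrow> nat" where
  "fst_state T x = snd (run_from T (start T) x)"

definition ILFST :: "fst \<Rightarrow> bool" where
  "ILFST T \<longleftrightarrow> wf_fst T \<and> inj (\<lambda>x. (fst_out T x, fst_state T x))"

text \<open>Entry j = 2q + b (q < m state, b bit) of the table encoding pi, given the numbers
  n_t = ns!j and n'_t = ns'!j, where t = j+1.\<close>
definition table_entry :: "fst \<Rightarrow> nat list \<Rightarrow> nat list \<Rightarrow> nat \<Rightarrow> bool list" where
  "table_entry T ns ns' j =
     (let q = j div 2; b = odd j in
       (if delta T q b = q then [] else dag (bin (ns ! j))) @ diam (str (ns' ! j)))"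

text \<open>y describes T: y = d(bin i) 01 pi, with start state q_i.\<close>
definition describes :: "bool list \<Rightarrow> fst \<Rightarrow> bool" where
  "describes y T \<longleftrightarrow> wf_fst T \<and>
     (\<exists>ns ns'. length ns = 2 * nstates T \<and> length ns' = 2 * nstates T \<and>
        (\<forall>j < 2 * nstates T. 1 \<le> ns ! j \<and> 1 \<le> ns' ! j \<and>
            delta T (j div 2) (odd j) = (ns ! j) mod nstates T \<and>
            nu T (j div 2) (odd j) = str (ns' ! j)) \<and>
        y = dbl (bin (start T + 1)) @ [False, True] @
            concat (map (table_entry T ns ns') [0..<2 * nstates T]))"

definition fst_size :: "fst \<Rightarrow> nat" where
  "fst_size T = (LEAST l. \<exists>y. describes y T \<and> length y = l)"

definition FST_le :: "nat \<Rightarrow> fst set" where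
  "FST_le k = {T. (\<exists>y. describes y T) \<and> fst_size T \<le> k}"

text \<open>D^k(x) (infinite if no FST in FST^{<=k} outputs x).\<close>
definition Dk :: "nat \<Rightarrow> bool list \<Rightarrow> enat" where
  "Dk k x = (INF y \<in> {y. \<exists>T \<in> FST_le k. fst_out T y = x}. enat (length y))"

definition FS_deep :: "(nat \<Rightarrow> bool) \<Rightarrow> bool" where
  "FS_deep S \<longleftrightarrow> (\<exists>\<alpha>::real > 0. \<forall>k. \<exists>k'.
     \<exists>\<^sub>F n in sequentially.
       ereal_of_enat (Dk k (prefix S n)) \<ge> ereal_of_enat (Dk k' (prefix S n)) + ereal (\<alpha> * real n))"

text \<open>Index of a phrase in the dictionary D (D ! (j-1) is phrase x_j; x_0 is the empty word).\<close>
definition lz_idx :: "bool list list \<Rightarrow> bool list \<Rightarrow> nat" where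
  "lz_idx D p = (if p = [] then 0 else Suc (LEAST j. j < length D \<and> D ! j = p))"

text \<open>Greedy LZ78 parsing; produces the pairs (l(i), b_i).  The fuel argument is the
  length of the remaining input (each step consumes at least one bit).\<close>
primrec lz_pairs :: "nat \<Rightarrow> bool list list \<Rightarrow> bool list \<Rightarrow> (nat \<times> bool) list" where
  "lz_pairs 0 D w = []"
| "lz_pairs (Suc f) D w =
     (if w = [] then [] else
      let k = (GREATEST k. k \<le> length w \<and> (take k w = [] \<or> take k w \<in> set D)) in
      if k = length w then [(lz_idx D (butlast w), last w)]
      else (lz_idx D (take k w), w ! k) # lz_pairs f (D @ [take (Suc k) w]) (drop (Suc k) w))"

definition lz_code :: "nat \<Rightarrow> bool list" where
  "lz_code j = dag (bin (j + 1))"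

definition LZ :: "bool list \<Rightarrow> bool list" where
  "LZ x = concat (map (\<lambda>(j, b). lz_code j @ [b]) (lz_pairs (length x) [] x))"

definition LZ_deep :: "(nat \<Rightarrow> bool) \<Rightarrow> bool" where
  "LZ_deep S \<longleftrightarrow> (\<exists>\<alpha>::real > 0. \<forall>C. ILFST C \<longrightarrow>
     (\<forall>\<^sub>F n in sequentially.
        real (length (fst_out C (prefix S n))) - real (length (LZ (prefix S n))) \<ge> \<alpha> * real n))"

definition io_LZ_deep :: "(nat \<Rightarrow> bool) \<Rightarrow> bool" where
  "io_LZ_deep S \<longleftrightarrow> (\<exists>\<alpha>::real > 0. \<forall>C. ILFST C \<longrightarrow>
     (\<exists>\<^sub>F n in sequentially.
        real (length (fst_out C (prefix S n))) - real (length (LZ (prefix S n))) \<ge> \<alpha> * real n))"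

end

theory Submission
  imports Defs
begin

text \<open>The sequence is built in stages; stage \<open>i\<close> extends the prefix \<open>p\<close> built so far by
  three parts.
  \<^item> Many copies of a block \<open>u\<close> from which every ILFST with at most \<open>i\<close> states and at most
    \<open>i\<close> output bits per transition produces, from any reachable state, more than three
    quarters of \<open>|u|\<close> bits.  LZ78 compresses \<open>p u\<^sup>N\<close> by the factor 8 once \<open>N\<close> is large,
    since its phrases are then long.  Hence the sequence is i.o. LZ-deep.
  \<^item> \<open>5 |p u\<^sup>N| + 2\<close> copies of a block \<open>w\<close> that no FST of size at most \<open>k\<close> produces from
    fewer than three quarters of \<open>|w|\<close> input bits, \<open>k\<close> being the first component of \<open>i\<close>.
    A three-state transducer copies the preceding prefix from two bits per bit and then
    emits \<open>w\<close> for each input bit.  As every \<open>k\<close> recurs, the sequence is FS-deep.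
  \<^item> A run of zeros \<open>i + 1\<close> times longer than everything before it, which an ILFST
    counting zeros modulo \<open>m\<close> compresses by the factor \<open>m\<close>.  Hence no \<open>\<alpha> > 0\<close> works
    for almost all prefixes, and the sequence is not LZ-deep.\<close>

section \<open>Runs of a transducer from an arbitrary state\<close>

definition out_from :: "fst \<Rightarrow> nat \<Rightarrow> bool list \<Rightarrow> bool list" where
  "out_from T q x = fst (run_from T q x)"

definition state_from :: "fst \<Rightarrow> nat \<Rightarrow> bool list \<Rightarrow> nat" where
  "state_from T q x = snd (run_from T q x)"

lemma out_from_Nil [simp]: "out_from T q [] = []"
  and state_from_Nil [simp]: "state_from T q [] = q"
  by (simp_all add: out_from_def state_from_def)

lemma out_from_Cons [simp]: "out_from T q (b # x) = nu T q b @ out_from T (delta T q b) x"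
  and state_from_Cons [simp]: "state_from T q (b # x) = state_from T (delta T q b) x"
  by (simp_all add: out_from_def state_from_def split: prod.split)

lemma out_from_append [simp]: "out_from T q (x @ y) = out_from T q x @ out_from T (state_from T q x) y"
  and state_from_append [simp]: "state_from T q (x @ y) = state_from T (state_from T q x) y"
  by (induct x arbitrary: q) auto

lemma fst_out_eq_out_from: "fst_out T x = out_from T (start T) x"
  by (simp add: fst_out_def out_from_def)

lemma fst_state_eq_state_from: "fst_state T x = state_from T (start T) x"
  by (simp add: fst_state_def state_from_def)

lemma state_from_less: "wf_fst T \<Longrightarrow> q < nstates T \<Longrightarrow> state_from T q x < nstates T"
  by (induct x arbitrary: q) (auto simp: wf_fst_def)

lemma fst_state_less: "wf_fst T \<Longrightarrow> fst_state T x < nstates T"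
  by (simp add: fst_state_eq_state_from state_from_less wf_fst_def)

lemma inj_out_state_from_fst_state:
  assumes "ILFST C"
  shows "inj (\<lambda>x. (out_from C (fst_state C z) x, state_from C (fst_state C z) x))"
proof (rule injI)
  fix x y
  assume "(out_from C (fst_state C z) x, state_from C (fst_state C z) x) =
          (out_from C (fst_state C z) y, state_from C (fst_state C z) y)"
  then have "(fst_out C (z @ x), fst_state C (z @ x)) = (fst_out C (z @ y), fst_state C (z @ y))"
    by (simp add: fst_out_eq_out_from fst_state_eq_state_from)
  then show "x = y"
    using assms unfolding ILFST_def inj_def by blast
qed

section \<open>Finitely many bounded transducers up to behaviour\<close>

text \<open>The values of \<open>delta\<close> and \<open>nu\<close> outside \<open>{..<nstates T}\<close> are junk; erasing them leaves
  only finitely many transducers of bounded size.\<close>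

definition trim_fst :: "fst \<Rightarrow> fst" where
  "trim_fst T = \<lparr>nstates = nstates T, start = start T,
     delta = (\<lambda>q b. if q < nstates T then delta T q b else 0),
     nu = (\<lambda>q b. if q < nstates T then nu T q b else [])\<rparr>"

lemma trim_fst_simps [simp]:
  "nstates (trim_fst T) = nstates T" "start (trim_fst T) = start T"
  "q < nstates T \<Longrightarrow> delta (trim_fst T) q b = delta T q b"
  "q < nstates T \<Longrightarrow> nu (trim_fst T) q b = nu T q b"
  by (auto simp: trim_fst_def)

lemma wf_trim_fst: "wf_fst T \<Longrightarrow> wf_fst (trim_fst T)"
  by (auto simp: wf_fst_def)

lemma out_state_from_trim_fst:
  assumes "wf_fst T" "q < nstates T"
  shows "out_from (trim_fst T) q x = out_from T q x \<and> state_from (trim_fst T) q x = state_from T q x"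
  using assms by (induct x arbitrary: q) (auto simp: wf_fst_def)

lemma fst_out_state_trim_fst:
  "wf_fst T \<Longrightarrow> fst_out (trim_fst T) x = fst_out T x \<and> fst_state (trim_fst T) x = fst_state T x"
  using out_state_from_trim_fst[of T "start T" x]
  by (auto simp: fst_out_eq_out_from fst_state_eq_state_from wf_fst_def)

lemma ILFST_trim_fst: "ILFST T \<Longrightarrow> ILFST (trim_fst T)"
  using fst_out_state_trim_fst[of T] wf_trim_fst[of T] by (simp add: ILFST_def)

definition bounded_fsts :: "nat \<Rightarrow> fst set" where
  "bounded_fsts i = {T. wf_fst T \<and> nstates T \<le> i \<and> (\<forall>q < nstates T. \<forall>b. length (nu T q b) \<le> i)}"

lemma bounded_fsts_mono: "i \<le> j \<Longrightarrow> bounded_fsts i \<subseteq> bounded_fsts j"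
  unfolding bounded_fsts_def by (auto intro: le_trans)

lemma bounded_fstsD:
  assumes "T \<in> bounded_fsts i"
  shows "wf_fst T" "nstates T \<le> i" "q < nstates T \<Longrightarrow> length (nu T q b) \<le> i"
  using assms by (auto simp: bounded_fsts_def)

lemma finite_trim_bounded_fsts: "finite (trim_fst ` bounded_fsts i)"
proof -
  define tables :: "fst \<Rightarrow> nat \<times> nat \<times> nat list \<times> bool list list" where
    "tables T = (nstates T, start T,
      map (\<lambda>j. delta T (j div 2) (odd j)) [0..<2 * nstates T],
      map (\<lambda>j. nu T (j div 2) (odd j)) [0..<2 * nstates T])" for T
  define of_tables :: "nat \<times> nat \<times> nat list \<times> bool list list \<Rightarrow> fst" where
    "of_tables = (\<lambda>(m, s, dl, nl). \<lparr>nstates = m, start = s,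
       delta = (\<lambda>q b. if q < m then dl ! (2 * q + of_bool b) else 0),
       nu = (\<lambda>q b. if q < m then nl ! (2 * q + of_bool b) else [])\<rparr>)"
  let ?A = "{..i} \<times> {..i} \<times> {dl :: nat list. set dl \<subseteq> {..i} \<and> length dl \<le> 2 * i} \<times>
            {nl. set nl \<subseteq> {l :: bool list. set l \<subseteq> UNIV \<and> length l \<le> i} \<and> length nl \<le> 2 * i}"
  have "finite ?A"
    by (intro finite_cartesian_product finite_lists_length_le finite_atMost)
       (auto simp: finite_lists_length_le)
  moreover have "trim_fst ` bounded_fsts i \<subseteq> of_tables ` ?A"
  proof
    fix C assume "C \<in> trim_fst ` bounded_fsts i"
    then obtain T where T: "T \<in> bounded_fsts i" and C: "C = trim_fst T" by auto
    have "C = of_tables (tables T)"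
      unfolding C trim_fst_def of_tables_def tables_def
      by (rule fst.equality) (auto intro!: ext)
    moreover have "tables T \<in> ?A"
    proof -
      note bd = bounded_fstsD[OF T]
      have "\<forall>j < 2 * nstates T. delta T (j div 2) (odd j) < nstates T"
        using bd(1) by (auto simp: wf_fst_def)
      then have "set (map (\<lambda>j. delta T (j div 2) (odd j)) [0..<2 * nstates T]) \<subseteq> {..i}"
        using bd(2) by fastforce
      moreover have "start T \<le> i" using bd(1,2) by (simp add: wf_fst_def)
      ultimately show ?thesis using bd(2,3) by (auto simp: tables_def)
    qed
    ultimately show "C \<in> of_tables ` ?A" by (rule image_eqI)
  qed
  ultimately show ?thesis using finite_surj by blast
qed

lemma finite_words_le: "finite {v :: bool list. length v \<le> L}"
  using finite_lists_length_le[of "UNIV :: bool set" L] by simp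

lemma card_words_le: "card {v :: bool list. length v \<le> L} < 2 ^ (L + 1)"
proof -
  have "card {v :: bool list. length v \<le> L} = (\<Sum>j\<le>L. 2 ^ j)"
    using card_lists_length_le[of "UNIV :: bool set" L] by simp
  also have "\<dots> < 2 ^ (L + 1)"
    by (induct L) simp_all
  finally show ?thesis .
qed

lemma ex_word_notin:
  assumes "finite B" "card B \<le> M * 2 ^ (L + 1)"
  shows "\<exists>x :: bool list. length x = L + 1 + M \<and> x \<notin> B"
proof (rule ccontr)
  let ?W = "{x :: bool list. length x = L + 1 + M}"
  assume "\<not> ?thesis"
  then have "?W \<subseteq> B" by auto
  then have "card ?W \<le> card B" by (rule card_mono[OF assms(1)])
  moreover have "card ?W = 2 ^ (L + 1 + M)"
    using card_lists_length_eq[of "UNIV :: bool set" "L + 1 + M"] by simp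
  moreover have "M * 2 ^ (L + 1) < 2 ^ (L + 1 + M)"
    using less_exp[of M] by (simp add: power_add)
  ultimately show False using assms(2) by linarith
qed

lemma card_short_outputs_ILFST:
  assumes "ILFST C" "nstates C \<le> i"
  shows "card {x. length x = l \<and> length (out_from C (fst_state C z) x) \<le> L} \<le> 2 ^ (L + 1) * i"
proof -
  let ?q = "fst_state C z"
  let ?f = "\<lambda>x. (out_from C ?q x, state_from C ?q x)"
  let ?X = "{x. length x = l \<and> length (out_from C ?q x) \<le> L}"
  have wf: "wf_fst C" using assms(1) by (simp add: ILFST_def)
  have "card ?X \<le> card ({v :: bool list. length v \<le> L} \<times> {..<i})"
  proof (rule card_inj_on_le)
    show "inj_on ?f ?X"
      using inj_out_state_from_fst_state[OF assms(1)] by (rule inj_on_subset) simp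
    show "?f ` ?X \<subseteq> {v. length v \<le> L} \<times> {..<i}"
      using state_from_less[OF wf fst_state_less[OF wf]] assms(2) by (auto intro: less_le_trans)
    show "finite ({v :: bool list. length v \<le> L} \<times> {..<i})"
      using finite_words_le by auto
  qed
  also have "\<dots> \<le> 2 ^ (L + 1) * i"
    using card_words_le[of L] by (simp add: card_cartesian_product)
  finally show ?thesis .
qed

section \<open>The LZ78 parsing\<close>

declare bin.simps [simp del]

lemma length_bin_le: "1 \<le> n \<Longrightarrow> n < 2 ^ E \<Longrightarrow> length (bin n) \<le> E"
proof (induct n arbitrary: E rule: bin.induct)
  case (1 n)
  show ?case
  proof (cases "n \<le> 1")
    case True
    then show ?thesis using 1 by (cases E) (auto simp: bin.simps[of n])
  next
    case False
    then obtain E' where E: "E = Suc E'" using 1 by (cases E) auto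
    have "length (bin (n div 2)) \<le> E'"
      using 1 False E by auto
    then show ?thesis using False E by (simp add: bin.simps[of n])
  qed
qed

lemma length_dag [simp]: "length (dag l) = 2 * length l"
  by (induct l rule: dag.induct) auto

text \<open>The quantity \<open>k\<close> computed in each step of \<open>lz_pairs\<close>.\<close>

definition lz_match_len :: "bool list list \<Rightarrow> bool list \<Rightarrow> nat" where
  "lz_match_len D w = (GREATEST k. k \<le> length w \<and> (take k w = [] \<or> take k w \<in> set D))"

lemma lz_match_len:
  shows lz_match_len_le: "lz_match_len D w \<le> length w"
    and take_lz_match_len: "take (lz_match_len D w) w = [] \<or> take (lz_match_len D w) w \<in> set D"
    and le_lz_match_len: "k \<le> length w \<Longrightarrow> take k w \<in> set D \<Longrightarrow> k \<le> lz_match_len D w"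
proof -
  let ?P = "\<lambda>k. k \<le> length w \<and> (take k w = [] \<or> take k w \<in> set D)"
  have bound: "\<And>k. ?P k \<Longrightarrow> k \<le> length w" by simp
  have "?P (lz_match_len D w)"
    unfolding lz_match_len_def by (rule GreatestI_nat[of ?P 0, OF _ bound]) simp
  then show "lz_match_len D w \<le> length w"
    and "take (lz_match_len D w) w = [] \<or> take (lz_match_len D w) w \<in> set D" by auto
  show "k \<le> length w \<Longrightarrow> take k w \<in> set D \<Longrightarrow> k \<le> lz_match_len D w"
    unfolding lz_match_len_def by (rule Greatest_le_nat[of ?P, OF _ bound]) auto
qed

lemma lz_pairs_Suc_eq:
  "lz_pairs (Suc f) D w =
     (if w = [] then [] else
      if lz_match_len D w = length w then [(lz_idx D (butlast w), last w)]
      else (lz_idx D (take (lz_match_len D w) w), w ! lz_match_len D w) #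
        lz_pairs f (D @ [take (Suc (lz_match_len D w)) w]) (drop (Suc (lz_match_len D w)) w))"
  by (simp only: lz_pairs.simps lz_match_len_def Let_def)

declare lz_pairs.simps(2) [simp del]

primrec lz_phrases :: "nat \<Rightarrow> bool list list \<Rightarrow> bool list \<Rightarrow> bool list list" where
  "lz_phrases 0 D w = []"
| "lz_phrases (Suc f) D w =
     (if w = [] then [] else
      if lz_match_len D w = length w then [w]
      else take (Suc (lz_match_len D w)) w #
        lz_phrases f (D @ [take (Suc (lz_match_len D w)) w]) (drop (Suc (lz_match_len D w)) w))"

lemma length_lz_pairs: "length (lz_pairs f D w) = length (lz_phrases f D w)"
  by (induct f arbitrary: D w) (auto simp: lz_pairs_Suc_eq)

lemma concat_lz_phrases: "length w \<le> f \<Longrightarrow> concat (lz_phrases f D w) = w"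
proof (induct f arbitrary: D w)
  case (Suc f)
  show ?case
  proof (cases "w = [] \<or> lz_match_len D w = length w")
    case False
    then have "lz_match_len D w < length w" using lz_match_len_le[of D w] by auto
    then show ?thesis using False Suc by simp
  qed auto
qed simp

lemma lz_phrases_nonempty: "\<phi> \<in> set (lz_phrases f D w) \<Longrightarrow> \<phi> \<noteq> []"
  by (induct f arbitrary: D w) (auto split: if_splits)

lemma distinct_butlast_lz_phrases:
  "distinct (butlast (lz_phrases f D w)) \<and> set (butlast (lz_phrases f D w)) \<inter> set D = {}"
proof (induct f arbitrary: D w)
  case (Suc f)
  show ?case
  proof (cases "w = [] \<or> lz_match_len D w = length w")
    case False
    let ?k = "lz_match_len D w"
    let ?\<phi> = "take (Suc ?k) w"
    let ?rest = "lz_phrases f (D @ [?\<phi>]) (drop (Suc ?k) w)"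
    have "?k < length w" using False lz_match_len_le[of D w] by auto
    then have "?\<phi> \<notin> set D" using le_lz_match_len[of "Suc ?k" w D] by auto
    moreover have "distinct (butlast ?rest) \<and> set (butlast ?rest) \<inter> set (D @ [?\<phi>]) = {}"
      by (rule Suc)
    moreover have "lz_phrases (Suc f) D w = ?\<phi> # ?rest" using False by simp
    ultimately show ?thesis by (cases ?rest) auto
  qed auto
qed simp

definition lz_closed :: "bool list list \<Rightarrow> bool" where
  "lz_closed D \<longleftrightarrow> (\<forall>p \<in> set D. butlast p = [] \<or> butlast p \<in> set D)"

lemma lz_idx_le: "p = [] \<or> p \<in> set D \<Longrightarrow> lz_idx D p \<le> length D"
proof (cases "p = []")
  case False
  assume "p = [] \<or> p \<in> set D"
  then obtain j where "j < length D" "D ! j = p" using False by (auto simp: in_set_conv_nth)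
  then have "(LEAST j. j < length D \<and> D ! j = p) < length D" by (metis (mono_tags, lifting) LeastI)
  then show ?thesis using False by (simp add: lz_idx_def)
qed (simp add: lz_idx_def)

lemma lz_pairs_index_less:
  "lz_closed D \<Longrightarrow> (j, b) \<in> set (lz_pairs f D w) \<Longrightarrow> j < length D + length (lz_pairs f D w)"
proof (induct f arbitrary: D w)
  case (Suc f)
  let ?k = "lz_match_len D w"
  consider "w = []" | "w \<noteq> []" "?k = length w" | "w \<noteq> []" "?k \<noteq> length w" by blast
  then show ?case
  proof cases
    case 1
    then show ?thesis using Suc by (simp add: lz_pairs_Suc_eq)
  next
    case 2
    then have "butlast w = [] \<or> butlast w \<in> set D"
      using take_lz_match_len[of D w] Suc(2) by (auto simp: lz_closed_def)
    then have "lz_idx D (butlast w) \<le> length D" by (rule lz_idx_le)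
    then show ?thesis using Suc(3) 2 by (simp add: lz_pairs_Suc_eq)
  next
    case 3
    let ?\<phi> = "take (Suc ?k) w"
    have "?k < length w" using 3 lz_match_len_le[of D w] by auto
    then have "lz_closed (D @ [?\<phi>])"
      using Suc(2) take_lz_match_len[of D w] by (auto simp: lz_closed_def butlast_take)
    moreover have "lz_idx D (take ?k w) \<le> length D"
      using take_lz_match_len[of D w] by (rule lz_idx_le)
    moreover have "lz_pairs (Suc f) D w =
        (lz_idx D (take ?k w), w ! ?k) # lz_pairs f (D @ [?\<phi>]) (drop (Suc ?k) w)"
      using 3 by (simp add: lz_pairs_Suc_eq)
    ultimately show ?thesis using Suc(1)[of "D @ [?\<phi>]" "drop (Suc ?k) w"] Suc(3) by auto
  qed
qed simp

lemma length_LZ: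
  "length (LZ x) = (\<Sum>(j, b) \<leftarrow> lz_pairs (length x) [] x. 2 * length (bin (j + 1)) + 1)"
proof -
  have "length (concat (map (\<lambda>(j, b). lz_code j @ [b]) ps)) =
        (\<Sum>(j, b) \<leftarrow> ps. 2 * length (bin (j + 1)) + 1)" for ps :: "(nat \<times> bool) list"
    by (induct ps) (auto simp: lz_code_def)
  then show ?thesis by (simp add: LZ_def)
qed

text \<open>With fewer than \<open>2 ^ E\<close> phrases every pointer is coded with at most \<open>2 * E\<close> bits.\<close>

lemma length_LZ_le:
  assumes "length (lz_phrases (length x) [] x) < 2 ^ E"
  shows "length (LZ x) \<le> length (lz_phrases (length x) [] x) * (2 * E + 1)"
proof -
  let ?ps = "lz_pairs (length x) [] x"
  have "(\<lambda>(j, b). 2 * length (bin (j + 1)) + 1) p \<le> 2 * E + 1" if p: "p \<in> set ?ps" for p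
  proof -
    obtain j b where jb: "p = (j, b)" by (cases p)
    have "j < length ?ps" using lz_pairs_index_less[of "[]" j b] p jb by (simp add: lz_closed_def)
    then have "length (bin (j + 1)) \<le> E"
      using assms by (intro length_bin_le) (auto simp: length_lz_pairs)
    then show ?thesis using jb by simp
  qed
  then have "length (LZ x) \<le> (\<Sum>p \<leftarrow> ?ps. 2 * E + 1)"
    unfolding length_LZ by (rule sum_list_mono)
  then show ?thesis by (simp add: sum_list_triv length_lz_pairs)
qed

section \<open>LZ78 on eventually periodic words\<close>

definition factor_at :: "bool list \<Rightarrow> nat \<Rightarrow> bool list \<Rightarrow> bool" where
  "factor_at u r v \<longleftrightarrow> (\<forall>i < length v. v ! i = u ! ((r + i) mod length u))"

definition cyclic_factor :: "bool list \<Rightarrow> bool list \<Rightarrow> bool" where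
  "cyclic_factor u v \<longleftrightarrow> (\<exists>r. factor_at u r v)"

lemma factor_at_append: "factor_at u r (a @ b) \<longleftrightarrow> factor_at u r a \<and> factor_at u (r + length a) b"
  unfolding factor_at_def
proof (rule iffI; intro conjI allI impI)
  fix i
  assume h: "\<forall>i < length (a @ b). (a @ b) ! i = u ! ((r + i) mod length u)"
  show "a ! i = u ! ((r + i) mod length u)" if "i < length a"
    using that h[rule_format, of i] by (simp add: nth_append)
next
  fix i
  assume h: "\<forall>i < length (a @ b). (a @ b) ! i = u ! ((r + i) mod length u)"
  show "b ! i = u ! ((r + length a + i) mod length u)" if "i < length b"
    using that h[rule_format, of "length a + i"] by (simp add: nth_append add.assoc)
next
  fix i
  assume h: "(\<forall>i < length a. a ! i = u ! ((r + i) mod length u)) \<and>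
             (\<forall>i < length b. b ! i = u ! ((r + length a + i) mod length u))"
    and i: "i < length (a @ b)"
  show "(a @ b) ! i = u ! ((r + i) mod length u)"
  proof (cases "i < length a")
    case False
    then show ?thesis using i h[THEN conjunct2, rule_format, of "i - length a"] by (simp add: nth_append)
  qed (use h in \<open>simp add: nth_append\<close>)
qed

lemma factor_at_concat: "factor_at u r (concat qs) \<Longrightarrow> q \<in> set qs \<Longrightarrow> cyclic_factor u q"
  by (induct qs arbitrary: r) (auto simp: factor_at_append cyclic_factor_def)

lemma factor_at_power: "factor_at u 0 (concat (replicate N u))"
proof (induct N)
  case (Suc N)
  then have "factor_at u (0 + length u) (concat (replicate N u))"
    unfolding factor_at_def by (simp add: mod_add_left_eq[symmetric])
  moreover have "factor_at u 0 u" by (simp add: factor_at_def)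
  ultimately show ?case by (simp only: factor_at_append concat_replicate_trivial replicate_Suc concat.simps)
qed (simp add: factor_at_def)

lemma card_short_cyclic_factors:
  assumes "u \<noteq> []"
  shows "card {v. cyclic_factor u v \<and> length v < R} \<le> length u * R"
proof -
  let ?f = "\<lambda>(r, l). map (\<lambda>i. u ! ((r + i) mod length u)) [0..<l]"
  have "{v. cyclic_factor u v \<and> length v < R} \<subseteq> ?f ` ({..<length u} \<times> {..<R})"
  proof
    fix v assume "v \<in> {v. cyclic_factor u v \<and> length v < R}"
    then obtain r where "factor_at u r v" "length v < R" by (auto simp: cyclic_factor_def)
    then show "v \<in> ?f ` ({..<length u} \<times> {..<R})"
      unfolding factor_at_def using assms
      by (intro image_eqI[where x = "(r mod length u, length v)"] nth_equalityI)
         (auto simp: mod_add_left_eq)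
  qed
  then have "card {v. cyclic_factor u v \<and> length v < R} \<le> card (?f ` ({..<length u} \<times> {..<R}))"
    by (intro card_mono) auto
  also have "\<dots> \<le> length u * R"
    using card_image_le[of "{..<length u} \<times> {..<R}" ?f] by (simp add: card_cartesian_product)
  finally show ?thesis .
qed

text \<open>Every piece that is not a cyclic factor of \<open>u\<close> starts inside \<open>p\<close>.\<close>

lemma length_filter_not_cyclic_factor:
  "concat qs = p @ v \<Longrightarrow> factor_at u r v \<Longrightarrow> (\<forall>q \<in> set qs. q \<noteq> []) \<Longrightarrow>
   length (filter (\<lambda>q. \<not> cyclic_factor u q) qs) \<le> length p"
proof (induct qs arbitrary: p v r)
  case (Cons q qs)
  show ?case
  proof (cases "length q < length p")
    case True
    then obtain p' where p': "p = q @ p'" using Cons(2)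
      by (metis append_eq_append_conv_if append_eq_conv_conj concat.simps(2) less_imp_le_nat)
    then have "concat qs = p' @ v" using Cons(2) by simp
    then have "length (filter (\<lambda>q. \<not> cyclic_factor u q) qs) \<le> length p'"
      using Cons(1,3,4) by auto
    moreover have "1 \<le> length q" using Cons(4) by (simp add: Suc_le_eq)
    moreover have "length (filter (\<lambda>q. \<not> cyclic_factor u q) (q # qs)) \<le>
        1 + length (filter (\<lambda>q. \<not> cyclic_factor u q) qs)" by simp
    ultimately show ?thesis using p' by simp
  next
    case False
    then obtain s where s: "q = p @ s" "v = s @ concat qs" using Cons(2)
      by (metis append_eq_append_conv_if append_eq_conv_conj concat.simps(2) not_less)
    then have "factor_at u (r + length s) (concat qs)" using Cons(3) by (simp add: factor_at_append)
    then have "filter (\<lambda>q. \<not> cyclic_factor u q) qs = []"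
      by (auto simp: filter_empty_conv dest: factor_at_concat)
    moreover have "p = [] \<Longrightarrow> cyclic_factor u q"
      using s Cons(3) by (auto simp: factor_at_append cyclic_factor_def)
    ultimately show ?thesis by (cases p) auto
  qed
qed simp

text \<open>Pieces are of three kinds: not cyclic factors, short cyclic factors (distinct, hence
  few) and long pieces (few because they are long).\<close>

lemma length_parse_periodic:
  assumes "concat qs = p @ v" "factor_at u r v" "\<forall>q \<in> set qs. q \<noteq> []"
    and "distinct (butlast qs)" "u \<noteq> []"
  shows "R * length qs \<le> R * (length p + length u * R + 1) + length (concat qs)"
proof -
  let ?N = "\<lambda>q. \<not> cyclic_factor u q"
  let ?S = "\<lambda>q. cyclic_factor u q \<and> length q < R"
  let ?L = "\<lambda>q. R \<le> length q"
  have split: "length qs \<le> length (filter ?N qs) + length (filter ?S qs) + length (filter ?L qs)"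
    by (induct qs) auto
  have short: "length (filter ?S qs) \<le> length u * R + 1"
  proof -
    have "length (filter ?S qs) \<le> length (filter ?S (butlast qs)) + 1"
      by (cases qs rule: rev_cases) auto
    also have "length (filter ?S (butlast qs)) = card (set (filter ?S (butlast qs)))"
      using assms(4) by (simp add: distinct_card del: set_filter)
    also have "\<dots> \<le> card {v. ?S v}"
      by (intro card_mono finite_subset[OF _ finite_words_le[of R]]) auto
    also have "\<dots> \<le> length u * R" by (rule card_short_cyclic_factors[OF assms(5)])
    finally show ?thesis by simp
  qed
  have long: "R * length (filter ?L qs) \<le> length (concat qs)"
    by (induct qs) auto
  have "R * length qs \<le> R * (length (filter ?N qs) + length (filter ?S qs)) + R * length (filter ?L qs)"
    using mult_le_mono2[OF split, of R] by (simp add: distrib_left)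
  also have "\<dots> \<le> R * (length p + (length u * R + 1)) + length (concat qs)"
    using length_filter_not_cyclic_factor[OF assms(1-3)] short long
    by (intro add_mono mult_le_mono2) auto
  finally show ?thesis by (simp add: add.assoc)
qed

lemma length_lz_phrases_periodic:
  assumes "u \<noteq> []" "0 < R" "x = p @ concat (replicate (R * R) u)"
  shows "length (lz_phrases (length x) [] x) \<le> 2 * length p + 2 * length u * R + 1"
proof -
  let ?qs = "lz_phrases (length x) [] x"
  have qs: "concat ?qs = x" by (rule concat_lz_phrases) simp
  have "R * length ?qs \<le> R * (length p + length u * R + 1) + length x"
    using length_parse_periodic[OF _ factor_at_power _ _ assms(1)] qs assms(3)
      lz_phrases_nonempty distinct_butlast_lz_phrases by metis
  also have "\<dots> \<le> R * (length p + length u * R + 1) + R * length p + R * (R * length u)"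
    using assms(2,3) by (simp add: length_concat sum_list_replicate)
  also have "\<dots> = R * (2 * length p + 2 * length u * R + 1)" by (simp add: algebra_simps)
  finally show ?thesis using assms(2) by (metis nat_mult_le_cancel1)
qed

text \<open>With \<open>R = A * 2 ^ e\<close>, \<open>e = 2 * A + 11\<close> and \<open>R\<^sup>2\<close> repetitions, the parse has at most
  \<open>3 * A * R < 2 ^ (2 * e)\<close> phrases, each coded with at most \<open>4 * e + 1\<close> bits, and
  \<open>24 * (4 * e + 1) \<le> 2 ^ e\<close>.\<close>

definition periodic_reps :: "nat \<Rightarrow> nat" where
  "periodic_reps A = (A * 2 ^ (2 * A + 11)) * (A * 2 ^ (2 * A + 11))"

lemma LZ_periodic_le:
  assumes "u \<noteq> []" "length p + length u < A"
  shows "8 * length (LZ (p @ concat (replicate (periodic_reps A) u))) \<le> periodic_reps A"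
proof -
  define e where "e = 2 * A + 11"
  define R where "R = A * 2 ^ e"
  define x where "x = p @ concat (replicate (R * R) u)"
  let ?qs = "lz_phrases (length x) [] x"
  have R: "0 < R" using assms(2) by (simp add: R_def)
  have "length ?qs \<le> 2 * length p + 2 * length u * R + 1"
    using length_lz_phrases_periodic[OF assms(1) R x_def] .
  also have "\<dots> \<le> 2 * length p * R + 2 * length u * R + 2 * R"
    using R by (intro add_mono) auto
  also have "\<dots> = 2 * (length p + length u + 1) * R" by (simp add: algebra_simps)
  also have "\<dots> \<le> 3 * A * R" using assms(2) by (intro mult_le_mono1) simp
  finally have qs: "length ?qs \<le> 3 * A * A * 2 ^ e" by (simp add: R_def mult.assoc)
  have "3 * A * A < 2 ^ e"
  proof -
    have "A * A < 2 ^ A * 2 ^ A" using less_exp[of A] by (simp add: mult_strict_mono')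
    also have "\<dots> = 2 ^ (2 * A)" by (simp add: power_add[symmetric] mult_2)
    finally have "3 * A * A \<le> 3 * 2 ^ (2 * A)" by simp
    also have "\<dots> < 2 ^ (2 * A) * 2 ^ 11" by simp
    also have "\<dots> = 2 ^ e" by (simp add: e_def power_add)
    finally show ?thesis .
  qed
  then have "3 * A * A * 2 ^ e < 2 ^ e * 2 ^ e" by simp
  with qs have "length ?qs < 2 ^ e * 2 ^ e" by (rule le_less_trans)
  then have "length ?qs < 2 ^ (e + e)" by (simp add: power_add)
  then have "length (LZ x) \<le> length ?qs * (2 * (e + e) + 1)" by (rule length_LZ_le)
  also have "\<dots> \<le> 3 * A * A * 2 ^ e * (4 * e + 1)" using qs by (intro mult_le_mono) auto
  finally have "8 * length (LZ x) \<le> 8 * (3 * A * A * 2 ^ e * (4 * e + 1))" by simp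
  also have "\<dots> = A * A * 2 ^ e * (24 * (4 * e + 1))" by (simp add: algebra_simps)
  also have "\<dots> \<le> A * A * 2 ^ e * 2 ^ e"
  proof (rule mult_le_mono2)
    have "11 \<le> e" by (simp add: e_def)
    then show "24 * (4 * e + 1) \<le> 2 ^ e" by (induct e rule: dec_induct) simp_all
  qed
  also have "\<dots> = R * R" by (simp add: R_def mult_ac)
  finally show ?thesis by (simp add: x_def R_def e_def periodic_reps_def)
qed

section \<open>Descriptions of transducers\<close>

text \<open>The inverse of \<open>str\<close>: the number with binary representation \<open>1 l\<close>.\<close>

definition num_of_str :: "bool list \<Rightarrow> nat" where
  "num_of_str l = foldl (\<lambda>n b. 2 * n + of_bool b) 1 l"

lemma num_of_str_snoc: "num_of_str (l @ [b]) = 2 * num_of_str l + of_bool b"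
  by (simp add: num_of_str_def)

lemma num_of_str_pos: "1 \<le> num_of_str l"
  by (induct l rule: rev_induct) (simp_all add: num_of_str_def)

lemma bin_num_of_str: "bin (num_of_str l) = True # l"
proof (induct l rule: rev_induct)
  case Nil
  then show ?case by (simp add: num_of_str_def bin.simps[of "Suc 0"])
next
  case (snoc b l)
  let ?n = "2 * num_of_str l + of_bool b"
  have "\<not> ?n \<le> 1" "?n div 2 = num_of_str l" "(?n mod 2 = 1) = b"
    using num_of_str_pos[of l] by auto
  then have "bin ?n = bin (num_of_str l) @ [b]" by (simp add: bin.simps[of ?n])
  then show ?case using snoc by (simp add: num_of_str_snoc)
qed

lemma str_num_of_str: "str (num_of_str l) = l"
  by (simp add: str_def bin_num_of_str)

lemma ex_describes:
  assumes "wf_fst T"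
  shows "\<exists>y. describes y T"
proof -
  let ?m = "nstates T"
  let ?ns = "map (\<lambda>j. delta T (j div 2) (odd j) + ?m) [0..<2 * ?m]"
  let ?ns' = "map (\<lambda>j. num_of_str (nu T (j div 2) (odd j))) [0..<2 * ?m]"
  have entries: "\<forall>j < 2 * ?m. 1 \<le> ?ns ! j \<and> 1 \<le> ?ns' ! j \<and>
      delta T (j div 2) (odd j) = (?ns ! j) mod ?m \<and> nu T (j div 2) (odd j) = str (?ns' ! j)"
    using assms num_of_str_pos by (auto simp: wf_fst_def str_num_of_str)
  have "describes (dbl (bin (start T + 1)) @ [False, True] @
      concat (map (table_entry T ?ns ?ns') [0..<2 * ?m])) T"
    unfolding describes_def by (intro conjI exI[of _ ?ns] exI[of _ ?ns'] refl entries assms) simp_all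
  then show ?thesis by blast
qed

lemma ex_describes_fst_size: "wf_fst T \<Longrightarrow> \<exists>y. describes y T \<and> length y = fst_size T"
  unfolding fst_size_def
  by (rule LeastI_ex[of "\<lambda>l. \<exists>y. describes y T \<and> length y = l"]) (blast dest: ex_describes)

lemma in_FST_le_fst_size: "wf_fst T \<Longrightarrow> T \<in> FST_le (fst_size T)"
  using ex_describes by (auto simp: FST_le_def)

lemma describes_length_ge:
  assumes "describes y T"
  shows "nstates T \<le> length y" and "q < nstates T \<Longrightarrow> length (nu T q b) \<le> length y"
proof -
  obtain ns ns' where ns: "\<forall>j < 2 * nstates T. nu T (j div 2) (odd j) = str (ns' ! j)"
    and y: "y = dbl (bin (start T + 1)) @ [False, True] @
                concat (map (table_entry T ns ns') [0..<2 * nstates T])"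
    using assms unfolding describes_def by blast
  let ?len = "\<lambda>j. length (table_entry T ns ns' j)"
  have entry: "2 * length (nu T (j div 2) (odd j)) + 2 \<le> ?len j" if "j < 2 * nstates T" for j
    using ns that by (simp add: table_entry_def Let_def diam_def)
  have sum: "length y \<ge> (\<Sum>j \<leftarrow> [0..<2 * nstates T]. ?len j)"
    by (simp add: y length_concat comp_def)
  have "(\<Sum>j \<leftarrow> [0..<2 * nstates T]. 2) \<le> (\<Sum>j \<leftarrow> [0..<2 * nstates T]. ?len j)"
    using entry by (intro sum_list_mono) fastforce
  then show "nstates T \<le> length y" using sum by (simp add: sum_list_triv)
  assume q: "q < nstates T"
  let ?j = "2 * q + of_bool b"
  have j: "?j < 2 * nstates T" "?j div 2 = q" "odd ?j = b" using q by auto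
  have "?len ?j \<le> (\<Sum>j \<leftarrow> [0..<2 * nstates T]. ?len j)"
    using j(1) by (intro member_le_sum_list) auto
  then show "length (nu T q b) \<le> length y" using entry[OF j(1)] j sum by simp
qed

lemma FST_le_subset_bounded_fsts: "FST_le k \<subseteq> bounded_fsts k"
proof
  fix T assume "T \<in> FST_le k"
  then obtain y0 where "describes y0 T" and size: "fst_size T \<le> k" by (auto simp: FST_le_def)
  then have wf: "wf_fst T" by (simp add: describes_def)
  then obtain y where y: "describes y T" "length y = fst_size T" using ex_describes_fst_size by blast
  have "nstates T \<le> k" using describes_length_ge(1)[OF y(1)] y(2) size by simp
  moreover have "\<forall>q < nstates T. \<forall>b. length (nu T q b) \<le> k"
    using describes_length_ge(2)[OF y(1)] y(2) size by (metis le_trans)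
  ultimately show "T \<in> bounded_fsts k" using wf by (simp add: bounded_fsts_def)
qed

section \<open>Inputs producing many copies of an unproducible block are long\<close>

lemma drop_take_append_drop_take:
  assumes "p \<le> m" "m \<le> n"
  shows "drop p (take m x) @ drop m (take n x) = drop p (take n x)"
proof -
  have "take n x = take m x @ drop m (take n x)"
    using assms(2) by (metis append_take_drop_id min.absorb1 take_take)
  then have "drop p (take n x) = drop p (take m x @ drop m (take n x))" by simp
  also have "\<dots> = drop p (take m x) @ drop m (take n x)"
    using assms by (cases "m \<le> length x") simp_all
  finally show ?thesis by simp
qed

text \<open>Every window of the output of a run emitting at most \<open>k\<close> bits per transition is, up to
  at most \<open>k\<close> bits at either end, the output of an input segment.  Hence each copy of a block
  that is not of this form for segments of length \<open>\<le> L\<close> costs \<open>L + 1\<close> input bits.\<close>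

locale bounded_run =
  fixes T :: fst and k :: nat and q0 :: nat and y :: "bool list"
  assumes wf: "wf_fst T" and nu_bound: "\<And>q b. q < nstates T \<Longrightarrow> length (nu T q b) \<le> k"
    and q0: "q0 < nstates T"
begin

definition out_len :: "nat \<Rightarrow> nat" where
  "out_len i = length (out_from T q0 (take i y))"

definition cut :: "nat \<Rightarrow> nat" where
  "cut p = (GREATEST i. i \<le> length y \<and> out_len i \<le> p)"

lemma out_from_take_split:
  "i \<le> j \<Longrightarrow> out_from T q0 (take j y) =
     out_from T q0 (take i y) @ out_from T (state_from T q0 (take i y)) (drop i (take j y))"
  by (metis append_take_drop_id min.absorb1 out_from_append take_take)

lemma out_len_Suc_le: "i < length y \<Longrightarrow> out_len (Suc i) \<le> out_len i + k"
  using nu_bound[OF state_from_less[OF wf q0]]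
  by (simp add: out_len_def take_Suc_conv_app_nth)

lemma take_out_len: "take (out_len i) (out_from T q0 y) = out_from T q0 (take i y)"
  using out_from_append[of T q0 "take i y" "drop i y"] by (simp add: out_len_def)

lemma cut:
  shows cut_le_length: "cut p \<le> length y"
    and out_len_cut_le: "out_len (cut p) \<le> p"
    and le_cut: "i \<le> length y \<Longrightarrow> out_len i \<le> p \<Longrightarrow> i \<le> cut p"
proof -
  let ?P = "\<lambda>i. i \<le> length y \<and> out_len i \<le> p"
  have bound: "\<And>i. ?P i \<Longrightarrow> i \<le> length y" by simp
  have "?P (cut p)"
    unfolding cut_def by (rule GreatestI_nat[of ?P 0, OF _ bound]) (simp add: out_len_def)
  then show "cut p \<le> length y" "out_len (cut p) \<le> p" by auto
  show "i \<le> length y \<Longrightarrow> out_len i \<le> p \<Longrightarrow> i \<le> cut p"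
    unfolding cut_def by (rule Greatest_le_nat[of ?P, OF _ bound]) auto
qed

lemma le_out_len_cut: "p \<le> length (out_from T q0 y) \<Longrightarrow> p \<le> out_len (cut p) + k"
proof (cases "cut p = length y")
  case False
  then have lt: "cut p < length y" using cut_le_length[of p] by simp
  then have "\<not> out_len (Suc (cut p)) \<le> p" using le_cut[of "Suc (cut p)" p] by auto
  then show ?thesis using out_len_Suc_le[OF lt] by simp
qed (simp add: out_len_def)

lemma cut_mono: "p \<le> p' \<Longrightarrow> cut p \<le> cut p'"
  using cut_le_length[of p] out_len_cut_le[of p] le_cut[of "cut p" p'] by simp

lemma output_window:
  assumes "p + l \<le> length (out_from T q0 y)" "k \<le> l"
  shows "\<exists>q s d b. q < nstates T \<and> length s = cut (p + l) - cut p \<and> d \<le> k \<and> length b \<le> k \<and>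
           take l (drop p (out_from T q0 y)) = drop d (out_from T q s) @ b"
proof -
  let ?x = "out_from T q0 y"
  let ?i = "cut p" and ?j = "cut (p + l)"
  let ?s = "drop ?i (take ?j y)" and ?q = "state_from T q0 (take ?i y)"
  have ij: "?i \<le> ?j" by (rule cut_mono) simp
  have i: "out_len ?i \<le> p" "p \<le> out_len ?i + k"
    using out_len_cut_le le_out_len_cut assms(1) by auto
  have j: "out_len ?j \<le> p + l" "p + l \<le> out_len ?j + k"
    using out_len_cut_le le_out_len_cut assms(1) by auto
  have "take (out_len ?j) ?x = take (out_len ?i) ?x @ out_from T ?q ?s"
    using out_from_take_split[OF ij] take_out_len by simp
  moreover have "length (take (out_len ?i) ?x) = out_len ?i" using i assms(1) by simp
  ultimately have "out_from T ?q ?s = drop (out_len ?i) (take (out_len ?j) ?x)"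
    by (metis append_eq_conv_conj)
  then have "drop (p - out_len ?i) (out_from T ?q ?s) = drop p (take (out_len ?j) ?x)"
    using i by simp
  moreover have "drop p (take (out_len ?j) ?x) @ drop (out_len ?j) (take (p + l) ?x) =
      take l (drop p ?x)"
    using drop_take_append_drop_take[of p "out_len ?j" "p + l" ?x] j assms(2)
    by (simp add: drop_take)
  moreover have "length (drop (out_len ?j) (take (p + l) ?x)) \<le> k" using j by simp
  moreover have "?q < nstates T" "length ?s = ?j - ?i" "p - out_len ?i \<le> k"
    using state_from_less[OF wf q0] cut_le_length[of "p + l"] i by auto
  ultimately show ?thesis by metis
qed

lemma input_length_ge_blocks:
  assumes out: "out_from T q0 y = P @ concat (replicate N w)" and "k \<le> length w"
    and unproducible: "\<And>q s d b. q < nstates T \<Longrightarrow> d \<le> k \<Longrightarrow> length b \<le> k \<Longrightarrow>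
       length s \<le> L \<Longrightarrow> w \<noteq> drop d (out_from T q s) @ b"
  shows "N * (L + 1) \<le> length y"
proof -
  have "j * (L + 1) \<le> cut (length P + j * length w)" if "j \<le> N" for j
    using that
  proof (induct j)
    case (Suc j)
    let ?p = "length P + j * length w"
    have "?p + length w \<le> length (out_from T q0 y)"
      using Suc(2) mult_le_mono1[OF Suc(2), of "length w"]
      by (simp add: out length_concat sum_list_replicate)
    then obtain q s d b where qs: "q < nstates T" "length s = cut (?p + length w) - cut ?p"
      "d \<le> k" "length b \<le> k" "take (length w) (drop ?p (out_from T q0 y)) = drop d (out_from T q s) @ b"
      using output_window assms(2) by blast
    have "concat (replicate N w) = concat (replicate j w) @ w @ concat (replicate (N - Suc j) w)"
      using Suc(2) by (metis concat.simps(2) concat_append replicate_Suc replicate_add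
        Suc_diff_le diff_Suc_Suc le_add_diff_inverse Suc_leD)
    then have "take (length w) (drop ?p (out_from T q0 y)) = w"
      by (simp add: out length_concat sum_list_replicate)
    then have "\<not> length s \<le> L" using unproducible[OF qs(1,3,4)] qs(5) by auto
    then show ?case using Suc qs(2) by (simp add: algebra_simps)
  qed simp
  then have "N * (L + 1) \<le> cut (length P + N * length w)" by simp
  also have "\<dots> \<le> length y" by (rule cut_le_length)
  finally show ?thesis .
qed

end

section \<open>Blocks that bounded transducers handle badly\<close>

text \<open>Blocks are found with \<open>ex_word_notin\<close> for \<open>L = 3 * (M + 1)\<close>; this choice makes every
  block cost at least three quarters of its length.\<close>

definition short_len :: "nat \<Rightarrow> nat" where
  "short_len M = 3 * (M + 1)"

definition block_len :: "nat \<Rightarrow> nat" where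
  "block_len M = short_len M + 1 + M"

definition producible_words :: "nat \<Rightarrow> nat \<Rightarrow> bool list set" where
  "producible_words k L = {w. \<exists>C \<in> trim_fst ` bounded_fsts k. \<exists>q < nstates C. \<exists>s d b.
      length s \<le> L \<and> d \<le> k \<and> length b \<le> k \<and> w = drop d (out_from C q s) @ b}"

definition fst_margin :: "nat \<Rightarrow> nat" where
  "fst_margin k = card (trim_fst ` bounded_fsts k) * (k + 1) * (k + 1) * 2 ^ (k + 1) + k"

lemma producible_words_card:
  "finite (producible_words k L) \<and> card (producible_words k L) \<le> fst_margin k * 2 ^ (L + 1)"
proof -
  let ?F = "trim_fst ` bounded_fsts k \<times> {..<k} \<times> {s :: bool list. length s \<le> L} \<times> {..k} \<times>
            {b :: bool list. length b \<le> k}"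
  let ?f = "\<lambda>(C, q, s, d, b). drop d (out_from C q s) @ b"
  have sub: "producible_words k L \<subseteq> ?f ` ?F"
  proof
    fix w assume "w \<in> producible_words k L"
    then obtain C q s d b where h: "C \<in> trim_fst ` bounded_fsts k" "q < nstates C" "length s \<le> L"
      "d \<le> k" "length b \<le> k" "w = drop d (out_from C q s) @ b"
      unfolding producible_words_def by blast
    have "nstates C \<le> k" using h(1) by (auto simp: bounded_fsts_def)
    then have "(C, q, s, d, b) \<in> ?F" using h by auto
    then show "w \<in> ?f ` ?F" using h(6) by force
  qed
  have fin: "finite ?F" using finite_trim_bounded_fsts finite_words_le by auto
  have "card (producible_words k L) \<le> card ?F"
    using card_mono[OF finite_imageI[OF fin] sub] card_image_le[OF fin, of ?f] by linarith
  also have "\<dots> = card (trim_fst ` bounded_fsts k) * k * card {s :: bool list. length s \<le> L} *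
      (k + 1) * card {b :: bool list. length b \<le> k}"
    by (simp only: card_cartesian_product card_lessThan card_atMost mult.assoc Suc_eq_plus1)
  also have "\<dots> \<le> card (trim_fst ` bounded_fsts k) * k * 2 ^ (L + 1) * (k + 1) * 2 ^ (k + 1)"
    using card_words_le by (intro mult_le_mono mult_le_mono1) (auto intro: less_imp_le)
  also have "\<dots> \<le> fst_margin k * 2 ^ (L + 1)"
    by (simp add: fst_margin_def algebra_simps)
  finally show ?thesis using sub fin finite_subset by blast
qed

definition fst_block :: "nat \<Rightarrow> bool list" where
  "fst_block k = (SOME w. length w = block_len (fst_margin k) \<and>
     w \<notin> producible_words k (short_len (fst_margin k)))"

lemma fst_block:
  shows length_fst_block: "length (fst_block k) = block_len (fst_margin k)"
    and fst_block_not_producible: "fst_block k \<notin> producible_words k (short_len (fst_margin k))"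
proof -
  have "\<exists>w. length w = block_len (fst_margin k) \<and> w \<notin> producible_words k (short_len (fst_margin k))"
    using ex_word_notin producible_words_card unfolding block_len_def by blast
  then show "length (fst_block k) = block_len (fst_margin k)"
    and "fst_block k \<notin> producible_words k (short_len (fst_margin k))"
    unfolding fst_block_def by (metis (mono_tags, lifting) someI_ex)+
qed

lemma input_length_ge_fst_blocks:
  assumes "T \<in> FST_le k" "fst_out T y = P @ concat (replicate N (fst_block k))"
  shows "N * (short_len (fst_margin k) + 1) \<le> length y"
proof -
  have T: "T \<in> bounded_fsts k" using assms(1) FST_le_subset_bounded_fsts by blast
  note bd = bounded_fstsD[OF T]
  interpret bounded_run T k "start T" y
    using bd by unfold_locales (auto simp: wf_fst_def)
  show ?thesis
  proof (rule input_length_ge_blocks)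
    show "out_from T (start T) y = P @ concat (replicate N (fst_block k))"
      using assms(2) by (simp add: fst_out_eq_out_from)
    show "k \<le> length (fst_block k)" by (simp add: length_fst_block block_len_def fst_margin_def)
  next
    fix q d and s b :: "bool list"
    assume h: "q < nstates T" "d \<le> k" "length b \<le> k" "length s \<le> short_len (fst_margin k)"
    show "fst_block k \<noteq> drop d (out_from T q s) @ b"
    proof
      assume "fst_block k = drop d (out_from T q s) @ b"
      then have "fst_block k = drop d (out_from (trim_fst T) q s) @ b"
        using out_state_from_trim_fst[OF bd(1) h(1)] by simp
      moreover have "trim_fst T \<in> trim_fst ` bounded_fsts k" "q < nstates (trim_fst T)"
        using T h(1) by simp_all
      ultimately have "fst_block k \<in> producible_words k (short_len (fst_margin k))"
        unfolding producible_words_def using h by blast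
      then show False using fst_block_not_producible by blast
    qed
  qed
qed

definition trimmed_ilfsts :: "nat \<Rightarrow> fst set" where
  "trimmed_ilfsts i = trim_fst ` (bounded_fsts i \<inter> Collect ILFST)"

definition compressible_words :: "nat \<Rightarrow> nat \<Rightarrow> nat \<Rightarrow> bool list set" where
  "compressible_words i L l = {u. length u = l \<and>
     (\<exists>C \<in> trimmed_ilfsts i. \<exists>z. length (out_from C (fst_state C z) u) \<le> L)}"

definition ilfst_margin :: "nat \<Rightarrow> nat" where
  "ilfst_margin i = card (trimmed_ilfsts i) * i * i"

lemma trimmed_ilfstsD: "C \<in> trimmed_ilfsts i \<Longrightarrow> ILFST C \<and> nstates C \<le> i"
  unfolding trimmed_ilfsts_def bounded_fsts_def using ILFST_trim_fst by auto

lemma compressible_words_card: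
  "finite (compressible_words i L l) \<and> card (compressible_words i L l) \<le> ilfst_margin i * 2 ^ (L + 1)"
proof -
  let ?B = "\<lambda>C q. {u. length u = l \<and> length (out_from C q u) \<le> L}"
  have finCA: "finite (trimmed_ilfsts i)"
    unfolding trimmed_ilfsts_def using finite_trim_bounded_fsts[of i] by (rule finite_subset[rotated]) auto
  have fin_range: "finite (range (fst_state C))" "card (range (fst_state C)) \<le> i"
    if "C \<in> trimmed_ilfsts i" for C
  proof -
    have "range (fst_state C) \<subseteq> {..<nstates C}"
      using trimmed_ilfstsD[OF that] fst_state_less by (auto simp: ILFST_def)
    then show "finite (range (fst_state C))" "card (range (fst_state C)) \<le> i"
      using card_mono[of "{..<nstates C}"] trimmed_ilfstsD[OF that]
      by (auto intro: finite_subset order_trans)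
  qed
  have "compressible_words i L l \<subseteq> (\<Union>C \<in> trimmed_ilfsts i. \<Union>q \<in> range (fst_state C). ?B C q)"
    unfolding compressible_words_def by blast
  moreover have fin: "finite (\<Union>C \<in> trimmed_ilfsts i. \<Union>q \<in> range (fst_state C). ?B C q)"
    by (rule finite_subset[OF _ finite_lists_length_eq[of "UNIV :: bool set" l]]) auto
  ultimately have "card (compressible_words i L l) \<le> card (\<Union>C \<in> trimmed_ilfsts i. \<Union>q \<in> range (fst_state C). ?B C q)"
    by (rule card_mono[rotated])
  also have "\<dots> \<le> (\<Sum>C \<in> trimmed_ilfsts i. card (\<Union>q \<in> range (fst_state C). ?B C q))"
    by (rule card_UN_le[OF finCA])
  also have "\<dots> \<le> (\<Sum>C \<in> trimmed_ilfsts i. \<Sum>q \<in> range (fst_state C). card (?B C q))"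
    using card_UN_le[OF fin_range(1)] by (rule sum_mono)
  also have "\<dots> \<le> (\<Sum>C \<in> trimmed_ilfsts i. i * (2 ^ (L + 1) * i))"
  proof (rule sum_mono)
    fix C assume C: "C \<in> trimmed_ilfsts i"
    have "(\<Sum>q \<in> range (fst_state C). card (?B C q)) \<le> (\<Sum>q \<in> range (fst_state C). 2 ^ (L + 1) * i)"
      using card_short_outputs_ILFST trimmed_ilfstsD[OF C] by (intro sum_mono) auto
    also have "\<dots> \<le> i * (2 ^ (L + 1) * i)" using fin_range(2)[OF C] by simp
    finally show "(\<Sum>q \<in> range (fst_state C). card (?B C q)) \<le> i * (2 ^ (L + 1) * i)" .
  qed
  also have "\<dots> = ilfst_margin i * 2 ^ (L + 1)" by (simp add: ilfst_margin_def)
  finally show ?thesis using fin \<open>compressible_words i L l \<subseteq> _\<close> finite_subset by blast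
qed

definition ilfst_block :: "nat \<Rightarrow> bool list" where
  "ilfst_block i = (SOME u. length u = block_len (ilfst_margin i) \<and>
     u \<notin> compressible_words i (short_len (ilfst_margin i)) (block_len (ilfst_margin i)))"

lemma ilfst_block:
  shows length_ilfst_block: "length (ilfst_block i) = block_len (ilfst_margin i)"
    and ilfst_block_not_compressible:
      "ilfst_block i \<notin> compressible_words i (short_len (ilfst_margin i)) (block_len (ilfst_margin i))"
proof -
  have "\<exists>u. length u = block_len (ilfst_margin i) \<and>
      u \<notin> compressible_words i (short_len (ilfst_margin i)) (block_len (ilfst_margin i))"
    using ex_word_notin compressible_words_card unfolding block_len_def by blast
  then show "length (ilfst_block i) = block_len (ilfst_margin i)"
    and "ilfst_block i \<notin> compressible_words i (short_len (ilfst_margin i)) (block_len (ilfst_margin i))"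
    unfolding ilfst_block_def by (metis (mono_tags, lifting) someI_ex)+
qed

lemma output_length_ge_ilfst_blocks:
  assumes C: "ILFST C" "C \<in> bounded_fsts i"
  shows "N * (short_len (ilfst_margin i) + 1) \<le>
    length (out_from C (fst_state C z) (concat (replicate N (ilfst_block i))))"
proof (induct N arbitrary: z)
  case (Suc N)
  have wf: "wf_fst C" using C by (simp add: ILFST_def)
  let ?q = "fst_state C z"
  have "short_len (ilfst_margin i) < length (out_from C ?q (ilfst_block i))"
  proof (rule ccontr)
    assume "\<not> ?thesis"
    then have "length (out_from (trim_fst C) (fst_state (trim_fst C) z) (ilfst_block i)) \<le> short_len (ilfst_margin i)"
      using out_state_from_trim_fst[OF wf fst_state_less[OF wf]] fst_out_state_trim_fst[OF wf] by simp
    moreover have "trim_fst C \<in> trimmed_ilfsts i" using C unfolding trimmed_ilfsts_def by auto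
    ultimately have "ilfst_block i \<in> compressible_words i (short_len (ilfst_margin i)) (block_len (ilfst_margin i))"
      unfolding compressible_words_def using length_ilfst_block by blast
    then show False using ilfst_block_not_compressible by blast
  qed
  moreover have "state_from C ?q (ilfst_block i) = fst_state C (z @ ilfst_block i)"
    by (simp add: fst_state_eq_state_from)
  ultimately show ?case using Suc[of "z @ ilfst_block i"] by simp
qed simp

section \<open>Two concrete transducers\<close>

text \<open>Reading \<open>0\<close>s, the state counts them modulo \<open>m\<close> and every \<open>m\<close>-th \<open>0\<close> emits a single \<open>0\<close>;
  a \<open>1\<close> read in state \<open>q\<close> emits \<open>1\<^sup>q\<^sup>+\<^sup>1 0\<close>.  Long runs of zeros are thus compressed by the
  factor \<open>m\<close>, and the output together with the final state determines the input.\<close>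

definition zero_counter :: "nat \<Rightarrow> fst" where
  "zero_counter m = \<lparr>nstates = m, start = 0,
     delta = (\<lambda>q b. if b then 0 else if Suc q = m then 0 else Suc q),
     nu = (\<lambda>q b. if b then replicate (Suc q) True @ [False] else if Suc q = m then [False] else [])\<rparr>"

lemma zero_counter_simps [simp]:
  "nstates (zero_counter m) = m" "start (zero_counter m) = 0"
  "delta (zero_counter m) q b = (if b then 0 else if Suc q = m then 0 else Suc q)"
  "nu (zero_counter m) q b =
     (if b then replicate (Suc q) True @ [False] else if Suc q = m then [False] else [])"
  by (simp_all add: zero_counter_def)

lemma wf_zero_counter: "0 < m \<Longrightarrow> wf_fst (zero_counter m)"
  by (auto simp: wf_fst_def)

fun zero_counter_decode :: "nat \<Rightarrow> bool list \<Rightarrow> bool list" where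
  "zero_counter_decode m [] = []"
| "zero_counter_decode m (False # r) = replicate m False @ zero_counter_decode m r"
| "zero_counter_decode m (True # r) =
     replicate (length (takeWhile id r)) False @ [True] @
     zero_counter_decode m (drop (Suc (length (takeWhile id r))) r)"

lemma zero_counter_decode_ones:
  "zero_counter_decode m (True # replicate q True @ False # r) =
     replicate q False @ [True] @ zero_counter_decode m r"
proof -
  have "takeWhile id (replicate q True @ False # r) = replicate q True" by (induct q) auto
  then show ?thesis by simp
qed

lemma zero_counter_decode_out_from:
  "q < m \<Longrightarrow> replicate q False @ x =
     zero_counter_decode m (out_from (zero_counter m) q x) @ replicate (state_from (zero_counter m) q x) False"
proof (induct x arbitrary: q)
  case (Cons b x)
  consider "b" | "\<not> b" "Suc q = m" | "\<not> b" "Suc q < m" using Cons(2) by linarith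
  then show ?case
  proof cases
    case 1
    then have "zero_counter_decode m (out_from (zero_counter m) q (b # x)) =
        zero_counter_decode m (True # replicate q True @ False # out_from (zero_counter m) 0 x)"
      by simp
    also have "\<dots> = replicate q False @ [True] @ zero_counter_decode m (out_from (zero_counter m) 0 x)"
      by (rule zero_counter_decode_ones)
    moreover have "0 < m" using Cons(2) by simp
    ultimately show ?thesis using 1 Cons(1)[of 0] by (simp del: zero_counter_decode.simps(3))
  next
    case 2
    have "replicate q False @ b # x = replicate m False @ x"
      using 2(1) 2(2)[symmetric] by (simp add: replicate_app_Cons_same)
    then show ?thesis using 2 Cons(1)[of 0] by simp
  next
    case 3
    then show ?thesis using Cons(1)[of "Suc q"] by (simp add: replicate_app_Cons_same)
  qed
qed simp

lemma ILFST_zero_counter: "0 < m \<Longrightarrow> ILFST (zero_counter m)"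
  unfolding ILFST_def
proof (intro conjI wf_zero_counter injI)
  fix x x'
  assume "0 < m"
    and "(fst_out (zero_counter m) x, fst_state (zero_counter m) x) =
         (fst_out (zero_counter m) x', fst_state (zero_counter m) x')"
  then show "x = x'"
    using zero_counter_decode_out_from[of 0 m x] zero_counter_decode_out_from[of 0 m x']
    by (simp add: fst_out_eq_out_from fst_state_eq_state_from)
qed

lemma length_out_from_zero_counter_le:
  "q < m \<Longrightarrow> length (out_from (zero_counter m) q x) \<le> (m + 1) * length x"
proof (induct x arbitrary: q)
  case (Cons b x)
  have "length (nu (zero_counter m) q b) \<le> m + 1" "delta (zero_counter m) q b < m"
    using Cons(2) by auto
  then show ?case using Cons(1)[of "delta (zero_counter m) q b"] by simp
qed simp

lemma length_out_from_zero_counter_zeros: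
  "q < m \<Longrightarrow> length (out_from (zero_counter m) q (replicate n False)) = (q + n) div m"
proof (induct n arbitrary: q)
  case (Suc n)
  show ?case
  proof (cases "Suc q = m")
    case True
    then have "length (out_from (zero_counter m) q (replicate (Suc n) False)) = n div m + 1"
      using Suc(1)[of 0] Suc(2) by simp
    also have "\<dots> = (m + n) div m" using Suc(2) by simp
    also have "m + n = q + Suc n" using True by simp
    finally show ?thesis .
  next
    case False
    then show ?thesis using Suc(1)[of "Suc q"] Suc(2) by simp
  qed
qed simp

definition copy_then_repeat :: "bool list \<Rightarrow> fst" where
  "copy_then_repeat w = \<lparr>nstates = 3, start = 0,
     delta = (\<lambda>q b. if q = 0 then (if b then 2 else 1) else if q = 1 then 0 else 2),
     nu = (\<lambda>q b. if q = 1 then [b] else if q = 2 then w else [])\<rparr>"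

definition pair_code :: "bool list \<Rightarrow> bool list" where
  "pair_code P = concat (map (\<lambda>b. [False, b]) P)"

lemma wf_copy_then_repeat: "wf_fst (copy_then_repeat w)"
  by (auto simp: wf_fst_def copy_then_repeat_def)

lemma fst_out_copy_then_repeat:
  "fst_out (copy_then_repeat w) (pair_code P @ [True] @ replicate N True) = P @ concat (replicate N w)"
proof -
  have "out_from (copy_then_repeat w) 0 (pair_code P) = P"
    and "state_from (copy_then_repeat w) 0 (pair_code P) = 0"
    by (induct P) (auto simp: pair_code_def copy_then_repeat_def)
  moreover have "out_from (copy_then_repeat w) 2 (replicate N True) = concat (replicate N w)"
    by (induct N) (auto simp: copy_then_repeat_def)
  ultimately show ?thesis by (simp add: fst_out_eq_out_from copy_then_repeat_def)
qed

lemma Dk_le: "T \<in> FST_le k \<Longrightarrow> fst_out T y = x \<Longrightarrow> Dk k x \<le> enat (length y)"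
  unfolding Dk_def by (rule INF_lower) blast

lemma le_Dk: "(\<And>T y. T \<in> FST_le k \<Longrightarrow> fst_out T y = x \<Longrightarrow> B \<le> length y) \<Longrightarrow> enat B \<le> Dk k x"
  unfolding Dk_def by (rule INF_greatest) auto

lemma Dk_copy_then_repeat_le:
  "Dk (fst_size (copy_then_repeat w)) (P @ concat (replicate N w)) \<le> enat (2 * length P + 1 + N)"
proof -
  have "Dk (fst_size (copy_then_repeat w)) (P @ concat (replicate N w)) \<le>
      enat (length (pair_code P @ [True] @ replicate N True))"
    by (rule Dk_le[OF in_FST_le_fst_size[OF wf_copy_then_repeat] fst_out_copy_then_repeat])
  moreover have "length (pair_code P) = 2 * length P" by (induct P) (auto simp: pair_code_def)
  ultimately show ?thesis by simp
qed

section \<open>The sequence\<close>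

definition stage_level :: "nat \<Rightarrow> nat" where
  "stage_level i = fst (prod_decode i)"

definition ilfst_reps :: "nat \<Rightarrow> bool list \<Rightarrow> nat" where
  "ilfst_reps i p = periodic_reps (length p + length (ilfst_block i) + 1)"

definition ilfst_part :: "nat \<Rightarrow> bool list \<Rightarrow> bool list" where
  "ilfst_part i p = p @ concat (replicate (ilfst_reps i p) (ilfst_block i))"

definition fst_reps :: "nat \<Rightarrow> bool list \<Rightarrow> nat" where
  "fst_reps i p = 5 * length (ilfst_part i p) + 2"

definition fst_part :: "nat \<Rightarrow> bool list \<Rightarrow> bool list" where
  "fst_part i p = ilfst_part i p @ concat (replicate (fst_reps i p) (fst_block (stage_level i)))"

definition zeros_len :: "nat \<Rightarrow> bool list \<Rightarrow> nat" where
  "zeros_len i p = (i + 1) * (length (fst_part i p) + 1)"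

primrec stage :: "nat \<Rightarrow> bool list" where
  "stage 0 = []"
| "stage (Suc i) = fst_part i (stage i) @ replicate (zeros_len i (stage i)) False"

definition deep_seq :: "nat \<Rightarrow> bool" where
  "deep_seq n = stage (Suc n) ! n"

lemma stage_mono: "i \<le> j \<Longrightarrow> \<exists>r. stage j = stage i @ r"
proof (induct j rule: dec_induct)
  case (step j)
  then show ?case by (auto simp: fst_part_def ilfst_part_def)
qed simp

lemma length_stage_ge: "i \<le> length (stage i)"
  by (induct i) (simp_all add: fst_part_def ilfst_part_def zeros_len_def)

lemma prefix_deep_seq:
  assumes "stage j = xs @ r"
  shows "prefix deep_seq (length xs) = xs"
proof -
  have "stage (Suc m) ! m = xs ! m" if m: "m < length xs" for m
  proof (cases "Suc m \<le> j")
    case True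
    then obtain r' where "stage j = stage (Suc m) @ r'" using stage_mono by blast
    moreover have "m < length (stage (Suc m))" using length_stage_ge[of "Suc m"] by simp
    ultimately show ?thesis using assms m by (metis nth_append)
  next
    case False
    then obtain r' where "stage (Suc m) = stage j @ r'" using stage_mono[of j "Suc m"] by auto
    then show ?thesis using assms m by (simp add: nth_append)
  qed
  then show ?thesis unfolding prefix_def deep_seq_def by (intro nth_equalityI) auto
qed

lemma prefix_deep_seq_ilfst_part:
  "prefix deep_seq (length (ilfst_part i (stage i))) = ilfst_part i (stage i)"
  by (rule prefix_deep_seq[of "Suc i"]) (simp add: fst_part_def)

lemma prefix_deep_seq_fst_part:
  "prefix deep_seq (length (fst_part i (stage i))) = fst_part i (stage i)"
  by (rule prefix_deep_seq[of "Suc i"]) simp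

lemma length_parts_ge: "i \<le> length (ilfst_part i (stage i))" "i \<le> length (fst_part i (stage i))"
  using length_stage_ge[of i] by (simp_all add: fst_part_def ilfst_part_def)

lemma le_periodic_reps: "A \<le> periodic_reps A"
proof (cases "A = 0")
  case False
  then have "A \<le> A * 2 ^ (2 * A + 11)" by simp
  also have "\<dots> \<le> periodic_reps A" using False by (simp add: periodic_reps_def)
  finally show ?thesis .
qed simp

lemma ilfst_part_gap:
  assumes "ILFST C" "C \<in> bounded_fsts i"
  defines "n \<equiv> length (ilfst_part i (stage i))"
  shows "1/4 * real n \<le>
    real (length (fst_out C (prefix deep_seq n))) - real (length (LZ (prefix deep_seq n)))"
proof -
  let ?p = "stage i" and ?u = "ilfst_block i" and ?N = "ilfst_reps i (stage i)"
  let ?M = "ilfst_margin i" and ?x = "prefix deep_seq n"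
  have x: "?x = ?p @ concat (replicate ?N ?u)"
    using prefix_deep_seq_ilfst_part[of i] by (simp add: n_def ilfst_part_def)
  have len: "n = length ?p + 4 * (?N * ?M) + 4 * ?N"
    by (simp add: n_def ilfst_part_def length_concat sum_list_replicate length_ilfst_block
      block_len_def short_len_def algebra_simps)
  have "?u \<noteq> []" using length_ilfst_block[of i] by (auto simp: block_len_def)
  then have lz: "8 * length (LZ ?x) \<le> ?N"
    unfolding x ilfst_reps_def by (intro LZ_periodic_le) simp_all
  have p: "length ?p \<le> ?N"
    unfolding ilfst_reps_def using le_periodic_reps[of "length ?p + length ?u + 1"] by linarith
  have "length (fst_out C ?x) =
      length (fst_out C ?p) + length (out_from C (fst_state C ?p) (concat (replicate ?N ?u)))"
    by (simp add: x fst_out_eq_out_from fst_state_eq_state_from)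
  then have out: "3 * (?N * ?M) + 4 * ?N \<le> length (fst_out C ?x)"
    using output_length_ge_ilfst_blocks[OF assms(1,2), of ?N ?p]
    by (simp add: short_len_def algebra_simps)
  have "2 * n + 8 * length (LZ ?x) \<le> 8 * length (fst_out C ?x)"
    using len lz p out by linarith
  then have "real (2 * n + 8 * length (LZ ?x)) \<le> real (8 * length (fst_out C ?x))"
    by (simp only: of_nat_le_iff)
  then show ?thesis by simp
qed

lemma fst_part_gap:
  assumes "stage_level i = k"
  defines "n \<equiv> length (fst_part i (stage i))"
  shows "ereal_of_enat (Dk (fst_size (copy_then_repeat (fst_block k))) (prefix deep_seq n)) +
      ereal (1/4 * real n) \<le> ereal_of_enat (Dk k (prefix deep_seq n))"
proof -
  let ?a = "ilfst_part i (stage i)" and ?N = "fst_reps i (stage i)" and ?M = "fst_margin k"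
  let ?x = "prefix deep_seq n"
  have x: "?x = ?a @ concat (replicate ?N (fst_block k))"
    using prefix_deep_seq_fst_part[of i] assms(1) by (simp add: n_def fst_part_def)
  have len: "n = length ?a + 4 * (?N * ?M) + 4 * ?N"
    using assms(1) by (simp add: n_def fst_part_def length_concat sum_list_replicate
      length_fst_block block_len_def short_len_def algebra_simps)
  have upper: "Dk (fst_size (copy_then_repeat (fst_block k))) ?x \<le> enat (2 * length ?a + 1 + ?N)"
    unfolding x by (rule Dk_copy_then_repeat_le)
  have lower: "enat (?N * (short_len ?M + 1)) \<le> Dk k ?x"
    using input_length_ge_fst_blocks x by (intro le_Dk) simp
  have "4 * (2 * length ?a + 1 + ?N) + n \<le> 4 * (?N * (short_len ?M + 1))"
    using len by (simp add: fst_reps_def short_len_def algebra_simps)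
  then have "real (4 * (2 * length ?a + 1 + ?N) + n) \<le> real (4 * (?N * (short_len ?M + 1)))"
    by (simp only: of_nat_le_iff)
  then have real: "real (2 * length ?a + 1 + ?N) + 1/4 * real n \<le> real (?N * (short_len ?M + 1))"
    by simp
  have "ereal_of_enat (Dk (fst_size (copy_then_repeat (fst_block k))) ?x) + ereal (1/4 * real n)
      \<le> ereal (real (2 * length ?a + 1 + ?N)) + ereal (1/4 * real n)"
    using upper by (intro add_right_mono) (metis ereal_of_enat_le_iff ereal_of_enat_simps(1))
  also have "\<dots> \<le> ereal (real (?N * (short_len ?M + 1)))" using real by simp
  also have "\<dots> \<le> ereal_of_enat (Dk k ?x)"
    using lower by (metis ereal_of_enat_le_iff ereal_of_enat_simps(1))
  finally show ?thesis .
qed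

lemma zero_counter_stage_le:
  assumes "0 < m"
  shows "real (length (fst_out (zero_counter m) (stage (Suc i)))) \<le>
    (real m + 1) * (real (length (fst_part i (stage i))) + 1) + real (zeros_len i (stage i)) / real m"
proof -
  let ?p = "fst_part i (stage i)" and ?Z = "zeros_len i (stage i)"
  let ?q = "state_from (zero_counter m) 0 ?p"
  have q: "?q < m" using state_from_less[OF wf_zero_counter[OF assms], of 0 ?p] assms by simp
  have "length (fst_out (zero_counter m) (stage (Suc i))) =
      length (out_from (zero_counter m) 0 ?p) + (?q + ?Z) div m"
    using length_out_from_zero_counter_zeros[OF q] by (simp add: fst_out_eq_out_from)
  moreover have "real (length (out_from (zero_counter m) 0 ?p)) \<le> real ((m + 1) * length ?p)"
    using length_out_from_zero_counter_le[of 0 m ?p] assms by (simp only: of_nat_le_iff)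
  moreover have "real ((?q + ?Z) div m) \<le> 1 + real ?Z / real m"
  proof -
    have "real ((?q + ?Z) div m) \<le> real (?q + ?Z) / real m" by (rule of_nat_div_le_of_nat)
    also have "\<dots> \<le> real (m + ?Z) / real m" using q by (intro divide_right_mono) auto
    also have "\<dots> = 1 + real ?Z / real m" using assms by (simp add: field_simps)
    finally show ?thesis .
  qed
  moreover have "real ((m + 1) * length ?p) + 1 \<le> (real m + 1) * (real (length ?p) + 1)"
    by (simp add: algebra_simps)
  ultimately show ?thesis by simp
qed

lemma frequently_zero_counter_short:
  assumes "0 < \<alpha>"
  shows "\<exists>m > 0. \<exists>\<^sub>F n in sequentially.
    real (length (fst_out (zero_counter m) (prefix deep_seq n))) < \<alpha> * real n"
proof (intro exI conjI)
  define m :: nat where "m = nat \<lceil>2 / \<alpha>\<rceil> + 1"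
  show m: "0 < m" by (simp add: m_def)
  have "2 / \<alpha> < real m" unfolding m_def by linarith
  then have \<alpha>m: "2 < \<alpha> * real m" using assms by (simp add: field_simps)
  show "\<exists>\<^sub>F n in sequentially. real (length (fst_out (zero_counter m) (prefix deep_seq n))) < \<alpha> * real n"
    unfolding frequently_sequentially
  proof
    fix M
    define i where "i = max M (nat \<lceil>2 * (real m + 1) / \<alpha>\<rceil>)"
    let ?p = "fst_part i (stage i)" and ?Z = "zeros_len i (stage i)"
    let ?n = "length (stage (Suc i))"
    have Z: "real ?Z = (real i + 1) * (real (length ?p) + 1)" by (simp add: zeros_len_def algebra_simps)
    have "2 * (real m + 1) / \<alpha> \<le> real i" unfolding i_def by linarith
    then have "2 * (real m + 1) \<le> \<alpha> * (real i + 1)" using assms by (simp add: field_simps)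
    then have "(real m + 1) * (real (length ?p) + 1) \<le> \<alpha> * real ?Z / 2"
      unfolding Z using mult_right_mono[of "2 * (real m + 1)" "\<alpha> * (real i + 1)" "real (length ?p) + 1"]
      by simp
    moreover have "real ?Z / real m < \<alpha> * real ?Z / 2"
    proof -
      have "0 < ?Z" by (simp add: zeros_len_def)
      then have "0 < real ?Z" by simp
      then have "real ?Z * 2 < real ?Z * (\<alpha> * real m)" using \<alpha>m by simp
      then show ?thesis using m by (simp add: field_simps)
    qed
    ultimately have "real (length (fst_out (zero_counter m) (stage (Suc i)))) < \<alpha> * real ?Z"
      using zero_counter_stage_le[OF m, of i] by linarith
    also have "\<dots> \<le> \<alpha> * real ?n" using assms by simp
    finally have "real (length (fst_out (zero_counter m) (prefix deep_seq ?n))) < \<alpha> * real ?n"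
      using prefix_deep_seq[of "Suc i" "stage (Suc i)" "[]"] by simp
    moreover have "M \<le> ?n" using length_stage_ge[of "Suc i"] max.cobounded1[of M] i_def by linarith
    ultimately show "\<exists>n \<ge> M. real (length (fst_out (zero_counter m) (prefix deep_seq n))) < \<alpha> * real n"
      by blast
  qed
qed

lemma ex_bounded_fsts: "wf_fst T \<Longrightarrow> \<exists>i. T \<in> bounded_fsts i"
proof -
  assume wf: "wf_fst T"
  define i where "i = nstates T + (\<Sum>q < nstates T. length (nu T q True) + length (nu T q False))"
  have "length (nu T q b) \<le> i" if "q < nstates T" for q b
  proof -
    have "length (nu T q b) \<le> length (nu T q True) + length (nu T q False)" by (cases b) auto
    also have "\<dots> \<le> (\<Sum>q < nstates T. length (nu T q True) + length (nu T q False))"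
      using that by (intro member_le_sum) auto
    finally show ?thesis unfolding i_def by linarith
  qed
  then have "T \<in> bounded_fsts i" using wf by (simp add: bounded_fsts_def i_def)
  then show ?thesis ..
qed

lemma deep_seq_io_LZ_deep: "io_LZ_deep deep_seq"
  unfolding io_LZ_deep_def
proof (intro exI[of _ "1/4"] conjI allI impI)
  show "(0::real) < 1/4" by simp
next
  fix C assume C: "ILFST C"
  then obtain i0 where i0: "C \<in> bounded_fsts i0" using ex_bounded_fsts by (auto simp: ILFST_def)
  show "\<exists>\<^sub>F n in sequentially.
      1/4 * real n \<le> real (length (fst_out C (prefix deep_seq n))) - real (length (LZ (prefix deep_seq n)))"
    unfolding frequently_sequentially
  proof
    fix M
    let ?i = "max M i0"
    have "C \<in> bounded_fsts ?i" using i0 bounded_fsts_mono[of i0 ?i] by auto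
    then show "\<exists>n \<ge> M. 1/4 * real n \<le>
        real (length (fst_out C (prefix deep_seq n))) - real (length (LZ (prefix deep_seq n)))"
      using ilfst_part_gap[OF C] length_parts_ge(1)[of ?i] by (meson le_trans max.cobounded1)
  qed
qed

lemma deep_seq_FS_deep: "FS_deep deep_seq"
  unfolding FS_deep_def
proof (intro exI[of _ "1/4"] conjI allI)
  show "(0::real) < 1/4" by simp
next
  fix k
  let ?k' = "fst_size (copy_then_repeat (fst_block k))"
  have "\<exists>\<^sub>F n in sequentially. ereal_of_enat (Dk ?k' (prefix deep_seq n)) + ereal (1/4 * real n)
      \<le> ereal_of_enat (Dk k (prefix deep_seq n))"
    unfolding frequently_sequentially
  proof
    fix M
    define i where "i = prod_encode (k, M)"
    have "stage_level i = k" by (simp add: i_def stage_level_def)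
    moreover have "M \<le> i" by (simp add: i_def le_prod_encode_2)
    ultimately show "\<exists>n \<ge> M. ereal_of_enat (Dk ?k' (prefix deep_seq n)) + ereal (1/4 * real n)
        \<le> ereal_of_enat (Dk k (prefix deep_seq n))"
      using fst_part_gap length_parts_ge(2)[of i] by (meson le_trans)
  qed
  then show "\<exists>k'. \<exists>\<^sub>F n in sequentially. ereal_of_enat (Dk k' (prefix deep_seq n)) +
      ereal (1/4 * real n) \<le> ereal_of_enat (Dk k (prefix deep_seq n))" by blast
qed

lemma deep_seq_not_LZ_deep: "\<not> LZ_deep deep_seq"
proof
  assume "LZ_deep deep_seq"
  then obtain \<alpha> :: real where "0 < \<alpha>" and deep: "\<And>C. ILFST C \<Longrightarrow> \<forall>\<^sub>F n in sequentially.
      real (length (fst_out C (prefix deep_seq n))) - real (length (LZ (prefix deep_seq n))) \<ge> \<alpha> * real n"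
    unfolding LZ_deep_def by blast
  then obtain m where "0 < m" and short: "\<exists>\<^sub>F n in sequentially.
      real (length (fst_out (zero_counter m) (prefix deep_seq n))) < \<alpha> * real n"
    using frequently_zero_counter_short by blast
  from frequently_eventually_conj[OF short deep[OF ILFST_zero_counter[OF \<open>0 < m\<close>]]]
  have "\<exists>\<^sub>F n in sequentially. False"
  proof (rule frequently_elim1)
    fix n
    have "0 \<le> real (length (LZ (prefix deep_seq n)))" by simp
    then show "\<alpha> * real n \<le> real (length (fst_out (zero_counter m) (prefix deep_seq n))) -
        real (length (LZ (prefix deep_seq n))) \<and>
      real (length (fst_out (zero_counter m) (prefix deep_seq n))) < \<alpha> * real n \<Longrightarrow> False"
      by linarith
  qed
  then show False by simp
qed

theorem mainTheorem9:
  shows "\<exists>S :: nat \<Rightarrow> bool. io_LZ_deep S \<and> FS_deep S \<and> \<not> LZ_deep S"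
  using deep_seq_io_LZ_deep deep_seq_FS_deep deep_seq_not_LZ_deep by blast

end
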